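(* Let $(X,T)$ be a minimal flow on a compact Hausdorff space $X$ (no assumption on $T$ and no invariant measure assumed). Then $P(x)\subset\overline{V(x)}$ for every $x\in X$. If moreover $X$ is metrizable, then $P\subset V$.
   Context: $X$ compact Hausdorff, $T$ a topological group acting continuously on $X$; minimal means every orbit is dense. Proximal relation: $(x,y)\in P$ iff there are a net $\{t_i\}\subset T$ and $z\in X$ with $t_ix\to z$ and $t_iy\to z$. Veech relation: $(x,y)\in V$ iff there are $z\in X$ and a net $\{t_i\}\subset T$ with $t_ix\to z$ and $t_i^{-1}z\to y$. For a relation $R$, $R(x)=\{y:(x,y)\in R\}$. *)

theory Defs
  imports "HOL-Analysis.Analysis"
begin

text \<open>A group T (written additively, not necessarily commutative, class topological_group_add)
  acting continuously on a topological space X (the universe of type 'a).\<close>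
definition continuous_action :: "('g::topological_group_add \<Rightarrow> 'a::topological_space \<Rightarrow> 'a) \<Rightarrow> bool" where
  "continuous_action act \<longleftrightarrow>
     (\<forall>x. act 0 x = x) \<and> (\<forall>s t x. act (s + t) x = act s (act t x)) \<and>
     continuous_on UNIV (\<lambda>p. act (fst p) (snd p))"

definition minimal_flow :: "('g::topological_group_add \<Rightarrow> 'a::topological_space \<Rightarrow> 'a) \<Rightarrow> bool" where
  "minimal_flow act \<longleftrightarrow> (\<forall>x. closure (range (\<lambda>t. act t x)) = UNIV)"

text \<open>Nets in T are represented by proper filters on T (a net t_i gives the image filter of
  the tails; conversely every proper filter is the tail filter of a net).\<close>
definition proximal_rel :: "('g::topological_group_add \<Rightarrow> 'a::topological_space \<Rightarrow> 'a) \<Rightarrow> ('a \<times> 'a) set" where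
  "proximal_rel act = {(x, y). \<exists>(F::'g filter) z. F \<noteq> bot \<and>
      ((\<lambda>t. act t x) \<longlongrightarrow> z) F \<and> ((\<lambda>t. act t y) \<longlongrightarrow> z) F}"

definition veech_rel :: "('g::topological_group_add \<Rightarrow> 'a::topological_space \<Rightarrow> 'a) \<Rightarrow> ('a \<times> 'a) set" where
  "veech_rel act = {(x, y). \<exists>(F::'g filter) z. F \<noteq> bot \<and>
      ((\<lambda>t. act t x) \<longlongrightarrow> z) F \<and> ((\<lambda>t. act (- t) z) \<longlongrightarrow> y) F}"

end

theory Submission
  imports Defs "HOL-Library.Countable"
begin

(*
  The heart of the proof is the approximation result
  proximal_veech_approximation: for every countable family g_0, g_1, ... of continuous real
  functions positive at y there are a point z and a proper filter F on T such that
  t x --> z along F and, for every m, eventually g_m(-t z) > 0.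
  Part 1 of the theorem applies it to one Urysohn function of a neighbourhood N of y: a cluster
  point y' of -t z along F lies in N and in V(x).  Part 2 (X metrizable) applies it to Urysohn
  functions of a countable neighbourhood base at y, which forces -t z --> y itself.

  Since X need not be metrizable, the approximation result is obtained from a countable
  "test family" of continuous functions, generated syntactically from the g_m by rational
  shifts, negation, minima and composition with countably many times t at which x and y enter
  a given open set together (such times exist by proximality and minimality).  A diagonal
  construction with nested closed sets (compactness) yields a point z serving all countably many
  requests of the test family; the filter of witness times then has a limit z' of t x which no
  test function distinguishes from z, and this suffices.
*)

section \<open>General topology\<close>

lemma refine_to_convergent:
  fixes f :: "'b \<Rightarrow> 'a::topological_space"
  assumes "compact (UNIV::'a set)" "F \<noteq> bot"
  obtains z where "inf F (filtercomap f (nhds z)) \<noteq> bot"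
    "(f \<longlongrightarrow> z) (inf F (filtercomap f (nhds z)))"
proof -
  have "filtermap f F \<noteq> bot" using assms(2) by (simp add: filtermap_bot_iff)
  then obtain z where z: "inf (nhds z) (filtermap f F) \<noteq> bot"
    using assms(1) unfolding compact_filter by auto
  have "inf F (filtercomap f (nhds z)) \<noteq> bot"
  proof
    assume "inf F (filtercomap f (nhds z)) = bot"
    then have "eventually (\<lambda>_. False) (inf F (filtercomap f (nhds z)))" by simp
    then obtain Q R where Q: "eventually Q F" and R: "eventually R (filtercomap f (nhds z))"
      and QR: "\<forall>x. Q x \<and> R x \<longrightarrow> False" unfolding eventually_inf by blast
    from R obtain S where S: "eventually S (nhds z)" and SR: "\<forall>x. S (f x) \<longrightarrow> R x"
      unfolding eventually_filtercomap by blast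
    have "eventually (\<lambda>a. \<not> S a) (filtermap f F)"
      unfolding eventually_filtermap using Q by (rule eventually_mono) (use QR SR in blast)
    then have "eventually (\<lambda>_. False) (inf (nhds z) (filtermap f F))"
      unfolding eventually_inf using S by blast
    then show False using z by (simp add: eventually_False)
  qed
  moreover have "(f \<longlongrightarrow> z) (inf F (filtercomap f (nhds z)))"
    by (rule filterlim_mono[OF filterlim_filtercomap]) auto
  ultimately show ?thesis using that by blast
qed

lemma compact_decseq_Inter_nonempty:
  fixes C :: "nat \<Rightarrow> 'a::topological_space set"
  assumes "compact (UNIV::'a set)" "decseq C" "\<And>k. closed (C k)" "\<And>k. C k \<noteq> {}"
  shows "\<Inter>(range C) \<noteq> {}"
proof -
  have "UNIV \<inter> (\<Inter>k\<in>UNIV. C k) \<noteq> {}"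
  proof (rule compact_imp_fip_image[OF assms(1)])
    fix I :: "nat set" assume "finite I"
    then have "C (Max (insert 0 I)) \<subseteq> C k" if "k \<in> I" for k
      using decseqD[OF assms(2)] Max_ge[of "insert 0 I" k] that by auto
    then have "C (Max (insert 0 I)) \<subseteq> (\<Inter>k\<in>I. C k)" by blast
    then show "UNIV \<inter> (\<Inter>k\<in>I. C k) \<noteq> {}" using assms(4) by blast
  qed (use assms(3) in auto)
  then show ?thesis by simp
qed

lemma compact_t2_urysohn:
  fixes y :: "'a::t2_space"
  assumes "compact (UNIV::'a set)" "open N" "y \<in> N"
  obtains f :: "'a \<Rightarrow> real"
  where "continuous_on UNIV f" "f y > 0" "\<And>a. f a \<ge> 0 \<Longrightarrow> a \<in> N"
proof -
  have "Hausdorff_space (euclidean :: 'a topology)"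
    by (auto simp: Hausdorff_space_def disjnt_def separation_t2)
  moreover have "compact_space (euclidean :: 'a topology)"
    using assms(1) by (simp add: compact_space_def)
  ultimately have "normal_space (euclidean :: 'a topology)"
    using compact_Hausdorff_or_regular_imp_normal_space by blast
  moreover have "closedin euclidean {y}" "closedin euclidean (- N)"
    using assms(2) by (auto simp: closed_closedin[symmetric])
  moreover have "disjnt {y} (- N)" using assms(3) by auto
  ultimately obtain h :: "'a \<Rightarrow> real"
    where h: "continuous_map euclidean euclideanreal h" "h ` {y} \<subseteq> {1}" "h ` (- N) \<subseteq> {-1}"
    by (rule Urysohn_lemma_alt)
  show ?thesis
  proof
    show "continuous_on UNIV h" using h(1) by simp
    show "h y > 0" using h(2) by simp
    show "a \<in> N" if "h a \<ge> 0" for a using that h(3) by force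
  qed
qed

lemma metrizable_nhds_base:
  fixes y :: "'a::topological_space"
  assumes "metrizable_space (euclidean :: 'a topology)"
  obtains W :: "nat \<Rightarrow> 'a set"
  where "\<And>n. open (W n)" "\<And>n. y \<in> W n" "\<And>U. open U \<Longrightarrow> y \<in> U \<Longrightarrow> \<exists>n. W n \<subseteq> U"
proof -
  have "\<exists>B. countable B \<and> (\<forall>V\<in>B. open V) \<and> (\<forall>U. open U \<and> y \<in> U \<longrightarrow> (\<exists>V\<in>B. y \<in> V \<and> V \<subseteq> U))"
    using metrizable_imp_first_countable[OF assms]
    unfolding first_countable_def open_openin[symmetric] by simp
  then obtain B where B: "countable B" "\<forall>V\<in>B. open V"
    "\<forall>U. open U \<and> y \<in> U \<longrightarrow> (\<exists>V\<in>B. y \<in> V \<and> V \<subseteq> U)"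
    by blast
  define B' where "B' = {V\<in>B. y \<in> V}"
  have B': "B' \<noteq> {}" "countable B'" using B(1) spec[OF B(3), of UNIV] unfolding B'_def by auto
  show ?thesis
  proof
    show "open (from_nat_into B' n)" "y \<in> from_nat_into B' n" for n
      using from_nat_into[OF B'(1), of n] B(2) unfolding B'_def by auto
    fix U assume "open U" "y \<in> U"
    then obtain V where V: "V \<in> B'" "V \<subseteq> U" using B(3) unfolding B'_def by blast
    then obtain n where "from_nat_into B' n = V" using from_nat_into_surj[OF B'(2)] by blast
    then show "\<exists>n. from_nat_into B' n \<subseteq> U" using V(2) by blast
  qed
qed

section \<open>Flows\<close>

lemma continuous_action_continuous_on:
  assumes "continuous_action act"
  shows "continuous_on UNIV (act t)"
proof -
  have "continuous_on UNIV (\<lambda>p. act (fst p) (snd p))"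
    using assms unfolding continuous_action_def by simp
  then have "continuous_on UNIV (\<lambda>a. act (fst (t, a)) (snd (t, a)))"
    by (rule continuous_on_compose2) (auto intro!: continuous_intros)
  then show ?thesis by simp
qed

lemma continuous_action_inverse:
  assumes "continuous_action act"
  shows "act (- t) (act t a) = a"
proof -
  have "act (- t) (act t a) = act (- t + t) a"
    using assms unfolding continuous_action_def by (simp only:)
  also have "\<dots> = a"
    using assms unfolding continuous_action_def by simp
  finally show ?thesis .
qed

text \<open>In a minimal flow a proximal pair enters every nonempty open set simultaneously:
  move the common limit point z into the open set using minimality.\<close>
lemma proximal_common_entry:
  fixes act :: "'g::topological_group_add \<Rightarrow> 'a::topological_space \<Rightarrow> 'a"
  assumes "continuous_action act" "minimal_flow act"
    and "(x, y) \<in> proximal_rel act" "open U" "U \<noteq> {}"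
  shows "\<exists>t. act t x \<in> U \<and> act t y \<in> U"
proof -
  from assms(3) obtain F :: "'g filter" and z where F: "F \<noteq> bot"
    "((\<lambda>t. act t x) \<longlongrightarrow> z) F" "((\<lambda>t. act t y) \<longlongrightarrow> z) F"
    unfolding proximal_rel_def by auto
  have "U \<inter> range (\<lambda>t. act t z) \<noteq> {}"
    using assms(2,4,5) open_Int_closure_eq_empty[OF assms(4), of "range (\<lambda>t. act t z)"]
    unfolding minimal_flow_def by simp
  then obtain s where s: "act s z \<in> U" by blast
  have U': "open (act s -` U)"
    using continuous_action_continuous_on[OF assms(1)] assms(4)
    by (auto simp: continuous_on_open_vimage[OF open_UNIV])
  have "eventually (\<lambda>t. act t x \<in> act s -` U \<and> act t y \<in> act s -` U) F"
    using topological_tendstoD[OF F(2) U'] topological_tendstoD[OF F(3) U'] s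
    by (auto intro: eventually_conj)
  then obtain t where "act s (act t x) \<in> U" "act s (act t y) \<in> U"
    using eventually_happens F(1) by fastforce
  then show ?thesis
    using assms(1) unfolding continuous_action_def by (intro exI[of _ "s + t"]) simp
qed

section \<open>The approximation construction\<close>

text \<open>Syntax of test functions: generators g_n, the constant 1, shifts by rationals, negation,
  minimum, and precomposition of e with the inverse of a common entry time into u > 0.\<close>
datatype test_term =
    Gen nat
  | One
  | Shift test_term rat
  | Neg test_term
  | Min test_term test_term
  | Back test_term test_term

instance test_term :: countable by countable_datatype

locale veech_construction =
  fixes act :: "'g::topological_group_add \<Rightarrow> 'a::t2_space \<Rightarrow> 'a"
    and x y :: 'a and g :: "nat \<Rightarrow> 'a \<Rightarrow> real"
  assumes compact: "compact (UNIV::'a set)"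
    and act_cont: "\<And>t. continuous_on UNIV (act t)"
    and act_inv: "\<And>t a. act (- t) (act t a) = a"
    and g_cont: "\<And>n. continuous_on UNIV (g n)"
    and g_pos: "\<And>n. g n y > 0"
    and common_entry: "\<And>U. open U \<Longrightarrow> U \<noteq> {} \<Longrightarrow> \<exists>t. act t x \<in> U \<and> act t y \<in> U"
begin

definition pick :: "'a set \<Rightarrow> 'g" where
  "pick U = (SOME t. act t x \<in> U \<and> act t y \<in> U)"

primrec tf :: "test_term \<Rightarrow> 'a \<Rightarrow> real" where
  "tf (Gen n) = g n"
| "tf One = (\<lambda>_. 1)"
| "tf (Shift e c) = (\<lambda>a. tf e a - of_rat c)"
| "tf (Neg e) = (\<lambda>a. - tf e a)"
| "tf (Min e e') = (\<lambda>a. min (tf e a) (tf e' a))"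
| "tf (Back e u) = (\<lambda>a. tf e (act (- pick {b. 0 < tf u b}) a))"

definition entry :: "test_term \<Rightarrow> 'g" where
  "entry u = pick {b. 0 < tf u b}"

lemma tf_Back [simp]: "tf (Back e u) = (\<lambda>a. tf e (act (- entry u) a))"
  by (simp add: entry_def)

declare tf.simps(6) [simp del]

lemma tf_continuous: "continuous_on UNIV (tf e)"
proof (induction e)
  case (Back e u)
  show ?case using continuous_on_compose2[OF Back.IH(1) act_cont subset_UNIV] by simp
qed (auto intro!: continuous_intros g_cont)

lemma tf_tendsto: "(f \<longlongrightarrow> a) F \<Longrightarrow> ((\<lambda>t. tf e (f t)) \<longlongrightarrow> tf e a) F"
  using tf_continuous[of e] by (auto intro: isCont_tendsto_compose simp: continuous_on_eq_continuous_at)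

lemma entry_time:
  assumes "tf u a > 0"
  shows "tf u (act (entry u) x) > 0" "tf u (act (entry u) y) > 0"
proof -
  have "open {b. 0 < tf u b}"
    using open_Collect_less[OF continuous_on_const tf_continuous] .
  then have "\<exists>t. act t x \<in> {b. 0 < tf u b} \<and> act t y \<in> {b. 0 < tf u b}"
    using assms by (intro common_entry) auto
  then have "act (entry u) x \<in> {b. 0 < tf u b} \<and> act (entry u) y \<in> {b. 0 < tf u b}"
    unfolding entry_def pick_def by (rule someI_ex)
  then show "tf u (act (entry u) x) > 0" "tf u (act (entry u) y) > 0" by auto
qed

fun guard :: "nat \<Rightarrow> test_term \<Rightarrow> test_term" where
  "guard 0 u = Back (Gen 0) u"
| "guard (Suc n) u = Min (guard n u) (Back (Gen (Suc n)) u)"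

lemma guard_pos: "tf (guard n u) a > 0 \<longleftrightarrow> (\<forall>m\<le>n. g m (act (- entry u) a) > 0)"
  by (induction n) (auto simp: le_Suc_eq)

lemma shrink:
  assumes "tf e p > 0"
  shows "\<exists>c. tf (Shift e c) p > 0 \<and> (\<forall>a. tf (Shift e c) a \<ge> 0 \<longrightarrow> tf e a > 0)"
proof -
  obtain c where c: "0 < (of_rat c :: real)" "of_rat c < tf e p"
    using of_rat_dense[OF assms] by blast
  have "tf e a > 0" if "tf (Shift e c) a \<ge> 0" for a
    using that c(1) by (simp del: zero_less_of_rat_iff)
  then show ?thesis using c(2) by (intro exI[of _ c]) simp
qed

text \<open>One step of the diagonal construction: the closed set tf e' \<ge> 0 (with nonempty
  positivity set) lies inside e > 0 and, if possible, serves the request (u, n): there is an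
  entry time sending x into u > 0 such that going back from any point of the new set lands
  where g_0, ..., g_n are positive.\<close>
definition refines :: "test_term \<Rightarrow> test_term \<Rightarrow> nat \<Rightarrow> test_term \<Rightarrow> bool" where
  "refines e u n e' \<longleftrightarrow> (\<exists>a. tf e' a > 0) \<and> (\<forall>a. tf e' a \<ge> 0 \<longrightarrow> tf e a > 0) \<and>
     ((\<exists>a. tf e a > 0 \<and> tf u a > 0) \<longrightarrow>
        (\<exists>v. tf u (act (entry v) x) > 0 \<and>
             (\<forall>a. tf e' a \<ge> 0 \<longrightarrow> (\<forall>m\<le>n. g m (act (- entry v) a) > 0))))"

lemma refinement_step:
  assumes "tf e a0 > 0"
  shows "\<exists>e'. refines e u n e'"
proof (cases "\<exists>a. tf e a > 0 \<and> tf u a > 0")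
  case True
  define v where "v = Min e u"
  have tf_v: "tf v a = min (tf e a) (tf u a)" for a by (simp add: v_def)
  from True have "\<exists>a. tf v a > 0" by (auto simp: tf_v)
  then have vx: "tf v (act (entry v) x) > 0" and vy: "tf v (act (entry v) y) > 0"
    using entry_time by blast+
  define p where "p = act (entry v) y"
  have "tf (guard n v) p > 0" unfolding guard_pos p_def act_inv using g_pos by auto
  then have "tf (Min v (guard n v)) p > 0" using vy by (simp add: p_def)
  then obtain c where c: "tf (Shift (Min v (guard n v)) c) p > 0"
    and sub: "\<And>a. tf (Shift (Min v (guard n v)) c) a \<ge> 0 \<Longrightarrow> tf (Min v (guard n v)) a > 0"
    using shrink by blast
  have inside: "tf e a > 0 \<and> (\<forall>m\<le>n. g m (act (- entry v) a) > 0)"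
    if "tf (Shift (Min v (guard n v)) c) a \<ge> 0" for a
  proof -
    have "tf v a > 0" "tf (guard n v) a > 0" using sub[OF that] by simp_all
    then show ?thesis unfolding guard_pos by (simp add: tf_v)
  qed
  have ux: "tf u (act (entry v) x) > 0" using vx by (simp add: tf_v)
  have "refines e u n (Shift (Min v (guard n v)) c)"
    unfolding refines_def
    by (intro conjI impI allI exI[of _ p] exI[of _ v]; use c inside ux in blast)
  then show ?thesis by blast
next
  case False
  obtain c where c: "tf (Shift e c) a0 > 0" "\<And>a. tf (Shift e c) a \<ge> 0 \<Longrightarrow> tf e a > 0"
    using shrink[OF assms] by blast
  have "refines e u n (Shift e c)"
    unfolding refines_def by (intro conjI impI allI exI[of _ a0]; use c False in blast)
  then show ?thesis by blast
qed

definition request :: "nat \<Rightarrow> test_term \<times> nat" where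
  "request k = map_prod from_nat id (prod_decode k)"

lemma request_surj: "request (prod_encode (to_nat u, n)) = (u, n)"
  by (simp add: request_def)

primrec stage :: "nat \<Rightarrow> test_term" where
  "stage 0 = One"
| "stage (Suc k) =
     (SOME e'. refines (stage k) (fst (request k)) (snd (request k)) e')"

lemma stage_refines: "refines (stage k) (fst (request k)) (snd (request k)) (stage (Suc k))"
proof (induction k)
  case 0
  have "tf (stage 0) x > 0" by simp
  then show ?case unfolding stage.simps(2) by (rule someI_ex[OF refinement_step])
next
  case (Suc k)
  then obtain a where "tf (stage (Suc k)) a > 0" unfolding refines_def by blast
  then show ?case unfolding stage.simps(2)[of "Suc k"] by (rule someI_ex[OF refinement_step])
qed

definition witness_times :: "'a \<Rightarrow> test_term \<Rightarrow> nat \<Rightarrow> 'g set" where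
  "witness_times z u n = {entry v | v. tf u (act (entry v) x) > 0 \<and>
                                       (\<forall>m\<le>n. g m (act (- entry v) z) > 0)}"

definition saturated :: "'a \<Rightarrow> bool" where
  "saturated z \<longleftrightarrow> (\<forall>u n. tf u z > 0 \<longrightarrow> witness_times z u n \<noteq> {})"

text \<open>A point in the intersection of all stages serves every request.\<close>
lemma saturated_point_exists: "\<exists>z. saturated z"
proof -
  define C where "C k = {a. tf (stage k) a \<ge> 0}" for k
  have inner: "C (Suc k) \<subseteq> {a. tf (stage k) a > 0}" for k
    using stage_refines[of k] unfolding refines_def C_def by auto
  have "\<Inter>(range C) \<noteq> {}"
  proof (rule compact_decseq_Inter_nonempty[OF compact])
    show "decseq C" using inner unfolding decseq_Suc_iff C_def by fastforce
    show "closed (C k)" for k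
      unfolding C_def by (rule closed_Collect_le[OF continuous_on_const tf_continuous])
    show "C k \<noteq> {}" for k
    proof (cases k)
      case (Suc j)
      then show ?thesis using stage_refines[of j] unfolding refines_def C_def
        by (auto intro: less_imp_le)
    qed (auto simp: C_def)
  qed
  then obtain z where z: "\<And>k. z \<in> C k" by blast
  have "witness_times z u n \<noteq> {}" if "tf u z > 0" for u n
  proof -
    define k where "k = prod_encode (to_nat u, n)"
    have "tf (stage k) z > 0" "tf (stage (Suc k)) z \<ge> 0"
      using inner[of k] z[of "Suc k"] unfolding C_def by auto
    then show ?thesis
      using stage_refines[of k] that
      unfolding k_def request_surj refines_def witness_times_def by fastforce
  qed
  then show ?thesis unfolding saturated_def by blast
qed

abbreviation requests :: "'a \<Rightarrow> (test_term \<times> nat) set" where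
  "requests z \<equiv> {(u, n). tf u z > 0}"

definition witness_filter :: "'a \<Rightarrow> 'g filter" where
  "witness_filter z =
     (INF b\<in>requests z. principal (witness_times z (fst b) (snd b)))"

lemma eventually_witness_filter:
  "eventually P (witness_filter z) \<longleftrightarrow>
     (\<exists>u n. tf u z > 0 \<and> (\<forall>t\<in>witness_times z u n. P t))"
proof -
  have "eventually P (witness_filter z) \<longleftrightarrow>
      (\<exists>b\<in>requests z. eventually P (principal (witness_times z (fst b) (snd b))))"
    unfolding witness_filter_def
  proof (rule eventually_INF_base)
    show "requests z \<noteq> {}" by (auto intro!: exI[of _ One])
    fix a b assume "a \<in> requests z" "b \<in> requests z"
    then show "\<exists>c\<in>requests z.
        principal (witness_times z (fst c) (snd c)) \<le>
        inf (principal (witness_times z (fst a) (snd a))) (principal (witness_times z (fst b) (snd b)))"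
      by (intro bexI[of _ "(Min (fst a) (fst b), max (snd a) (snd b))"])
        (auto simp: witness_times_def)
  qed
  then show ?thesis by (auto simp: eventually_principal)
qed

lemma witness_filter_proper: "saturated z \<Longrightarrow> witness_filter z \<noteq> bot"
  unfolding trivial_limit_def eventually_witness_filter saturated_def by blast

text \<open>A limit z' of t x along a refinement of the witness filter is indistinguishable from z
  by test functions: each tf u is at least its value at z (test Shift u c), and Neg gives
  the reverse inequality.\<close>
lemma limit_indistinguishable:
  assumes "F \<le> witness_filter z" "F \<noteq> bot" "((\<lambda>t. act t x) \<longlongrightarrow> z') F"
  shows "tf u z' = tf u z"
proof -
  have ge: "tf w z' \<ge> tf w z" for w
  proof (rule ccontr)
    assume "\<not> tf w z' \<ge> tf w z"
    then obtain c where c: "tf w z' < of_rat c" "of_rat c < tf w z"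
      by (meson not_le of_rat_dense)
    have "eventually (\<lambda>t. t \<in> witness_times z (Shift w c) 0) (witness_filter z)"
      using c(2) unfolding eventually_witness_filter by (auto intro!: exI[of _ "Shift w c"])
    then have "eventually (\<lambda>t. of_rat c \<le> tf w (act t x)) F"
      by (rule filter_leD[OF assms(1), THEN eventually_mono]) (auto simp: witness_times_def)
    then have "of_rat c \<le> tf w z'"
      using assms(2) tf_tendsto[OF assms(3)] by (intro tendsto_lowerbound) auto
    then show False using c(1) by simp
  qed
  show ?thesis using ge[of u] ge[of "Neg u"] by simp
qed

theorem veech_approximation:
  "\<exists>z F. F \<noteq> bot \<and> ((\<lambda>t. act t x) \<longlongrightarrow> z) F \<and>
     (\<forall>m. eventually (\<lambda>t. g m (act (- t) z) > 0) F)"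
proof -
  obtain z where z: "saturated z" using saturated_point_exists by blast
  obtain z' where ne: "inf (witness_filter z) (filtercomap (\<lambda>t. act t x) (nhds z')) \<noteq> bot"
    and lim: "((\<lambda>t. act t x) \<longlongrightarrow> z') (inf (witness_filter z) (filtercomap (\<lambda>t. act t x) (nhds z')))"
    using refine_to_convergent[OF compact witness_filter_proper[OF z]] by blast
  define F where "F = inf (witness_filter z) (filtercomap (\<lambda>t. act t x) (nhds z'))"
  have le: "F \<le> witness_filter z" unfolding F_def by simp
  have "eventually (\<lambda>t. g m (act (- t) z') > 0) F" for m
  proof -
    have "eventually (\<lambda>t. t \<in> witness_times z One m) (witness_filter z)"
      unfolding eventually_witness_filter by (auto intro!: exI[of _ One])
    moreover have "g m (act (- t) z') > 0" if "t \<in> witness_times z One m" for t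
    proof -
      from that obtain v where t: "t = entry v" "g m (act (- t) z) > 0"
        unfolding witness_times_def by auto
      have "g m (act (- t) z') = tf (Back (Gen m) v) z'" using t(1) by simp
      also have "\<dots> = tf (Back (Gen m) v) z"
        using limit_indistinguishable[OF le] ne lim unfolding F_def by blast
      finally show ?thesis using t by simp
    qed
    ultimately have "eventually (\<lambda>t. g m (act (- t) z') > 0) (witness_filter z)"
      by (auto elim: eventually_mono)
    then show ?thesis by (rule filter_leD[OF le])
  qed
  then show ?thesis using ne lim unfolding F_def by blast
qed

end

section \<open>Proximal pairs and the Veech relation\<close>

lemma proximal_veech_approximation:
  fixes act :: "'g::topological_group_add \<Rightarrow> 'a::t2_space \<Rightarrow> 'a"
    and g :: "nat \<Rightarrow> 'a \<Rightarrow> real"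
  assumes "compact (UNIV :: 'a set)" "continuous_action act" "minimal_flow act"
    and "(x, y) \<in> proximal_rel act"
    and "\<And>n. continuous_on UNIV (g n)" "\<And>n. g n y > 0"
  shows "\<exists>z F. F \<noteq> bot \<and> ((\<lambda>t. act t x) \<longlongrightarrow> z) F \<and>
     (\<forall>m. eventually (\<lambda>t. g m (act (- t) z) > 0) F)"
proof -
  interpret veech_construction act x y g
    by unfold_locales (simp_all add: assms continuous_action_continuous_on
        continuous_action_inverse proximal_common_entry[OF assms(2-4)])
  show ?thesis by (rule veech_approximation)
qed

text \<open>Given an open N around y, apply the
  approximation result to a Urysohn function f of N; a cluster point y' of -t z lies in V(x)
  and, since f(-t z) > 0 eventually, in N.\<close>
lemma proximal_in_closure_veech:
  fixes act :: "'g::topological_group_add \<Rightarrow> 'a::t2_space \<Rightarrow> 'a"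
  assumes cpt: "compact (UNIV :: 'a set)" and "continuous_action act" "minimal_flow act"
    and "(x, y) \<in> proximal_rel act"
  shows "y \<in> closure (veech_rel act `` {x})"
  unfolding closure_iff_nhds_not_empty
proof (intro allI impI)
  fix A N assume "N \<subseteq> A" "open N" "y \<in> N"
  obtain f :: "'a \<Rightarrow> real"
    where f: "continuous_on UNIV f" "f y > 0" "\<And>a. f a \<ge> 0 \<Longrightarrow> a \<in> N"
    using compact_t2_urysohn[OF cpt \<open>open N\<close> \<open>y \<in> N\<close>] by blast
  have "\<exists>z F. F \<noteq> bot \<and> ((\<lambda>t. act t x) \<longlongrightarrow> z) F \<and>
      (\<forall>m::nat. eventually (\<lambda>t. f (act (- t) z) > 0) F)"
    by (rule proximal_veech_approximation[OF assms f(1) f(2)])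
  then obtain z F where F: "F \<noteq> bot" "((\<lambda>t. act t x) \<longlongrightarrow> z) F"
    "eventually (\<lambda>t. f (act (- t) z) > 0) F"
    by blast
  obtain y' where ne: "inf F (filtercomap (\<lambda>t. act (- t) z) (nhds y')) \<noteq> bot"
    and lim: "((\<lambda>t. act (- t) z) \<longlongrightarrow> y') (inf F (filtercomap (\<lambda>t. act (- t) z) (nhds y')))"
    using refine_to_convergent[OF cpt F(1)] by blast
  define F' where "F' = inf F (filtercomap (\<lambda>t. act (- t) z) (nhds y'))"
  have le: "F' \<le> F" unfolding F'_def by simp
  have F': "F' \<noteq> bot" "((\<lambda>t. act t x) \<longlongrightarrow> z) F'" "((\<lambda>t. act (- t) z) \<longlongrightarrow> y') F'"
    using ne lim tendsto_mono[OF le F(2)] unfolding F'_def by simp_all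
  then have "(x, y') \<in> veech_rel act" unfolding veech_rel_def by blast
  moreover have "f y' \<ge> 0"
  proof (rule tendsto_lowerbound)
    show "((\<lambda>t. f (act (- t) z)) \<longlongrightarrow> f y') F'"
      using f(1) F'(3) by (auto intro: isCont_tendsto_compose simp: continuous_on_eq_continuous_at)
    show "eventually (\<lambda>t. 0 \<le> f (act (- t) z)) F'"
      using filter_leD[OF le F(3)] by (rule eventually_mono) simp
  qed (rule F'(1))
  ultimately show "veech_rel act `` {x} \<inter> A \<noteq> {}" using f(3) \<open>N \<subseteq> A\<close> by blast
qed

text \<open>Part 2: for metrizable X every proximal pair is a Veech pair.  Apply the approximation
  result to Urysohn functions of a countable neighbourhood base at y: then -t z --> y.\<close>
lemma proximal_imp_veech_metrizable:
  fixes act :: "'g::topological_group_add \<Rightarrow> 'a::t2_space \<Rightarrow> 'a"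
  assumes cpt: "compact (UNIV :: 'a set)" and "continuous_action act" "minimal_flow act"
    and "(x, y) \<in> proximal_rel act" and met: "metrizable_space (euclidean :: 'a topology)"
  shows "(x, y) \<in> veech_rel act"
proof -
  obtain W :: "nat \<Rightarrow> 'a set" where W: "\<And>n. open (W n)" "\<And>n. y \<in> W n"
    "\<And>U. open U \<Longrightarrow> y \<in> U \<Longrightarrow> \<exists>n. W n \<subseteq> U"
    using metrizable_nhds_base[OF met] by blast
  define urysohn where "urysohn n f \<longleftrightarrow>
      continuous_on UNIV f \<and> f y > 0 \<and> (\<forall>a. f a \<ge> 0 \<longrightarrow> a \<in> W n)" for n and f :: "'a \<Rightarrow> real"
  define fs where "fs n = (SOME f. urysohn n f)" for n
  have "urysohn n (fs n)" for n
  proof -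
    have "\<exists>f. urysohn n f"
      using compact_t2_urysohn[OF cpt W(1) W(2), of n] unfolding urysohn_def by blast
    then show ?thesis unfolding fs_def by (rule someI_ex)
  qed
  then have fs: "\<And>n. continuous_on UNIV (fs n)" "\<And>n. fs n y > 0"
    "\<And>n a. fs n a \<ge> 0 \<Longrightarrow> a \<in> W n" unfolding urysohn_def by blast+
  obtain z F where F: "F \<noteq> bot" "((\<lambda>t. act t x) \<longlongrightarrow> z) F"
    "\<And>m. eventually (\<lambda>t. fs m (act (- t) z) > 0) F"
    using proximal_veech_approximation[where g = fs, OF assms(1-4) fs(1) fs(2)] by blast
  have "((\<lambda>t. act (- t) z) \<longlongrightarrow> y) F"
  proof (rule topological_tendstoI)
    fix U assume "open U" "y \<in> U"
    then obtain n where n: "W n \<subseteq> U" using W(3) by blast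
    show "eventually (\<lambda>t. act (- t) z \<in> U) F"
      using F(3)[of n] by (rule eventually_mono) (use fs(3)[of n] n in force)
  qed
  then show ?thesis unfolding veech_rel_def using F(1,2) by blast
qed

theorem mainTheorem8:
  fixes act :: "'g::topological_group_add \<Rightarrow> 'a::t2_space \<Rightarrow> 'a"
  assumes "compact (UNIV :: 'a set)"
    and "continuous_action act"
    and "minimal_flow act"
  shows "(\<forall>x. proximal_rel act `` {x} \<subseteq> closure (veech_rel act `` {x}))
       \<and> (metrizable_space (euclidean :: 'a topology) \<longrightarrow> proximal_rel act \<subseteq> veech_rel act)"
  using proximal_in_closure_veech[OF assms] proximal_imp_veech_metrizable[OF assms] by auto

end
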